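(* Consider the following heap data structure $H$ in the word-RAM model. A global time counter $t$ (initially $0$) is incremented after every \textsc{Push}; for an element $x_i$ of $H$, $a_i$ denotes the value of $t$ when $x_i$ was pushed. The elements of $H$ are partitioned into an array of buckets $B$; each bucket $B[j]$ contains one or two Fibonacci heaps, every element of $H$ lies in exactly one of these Fibonacci heaps, and with each Fibonacci heap $F$ a half-open interval $I_F\subset\mathbb{R}$ is stored, such that at all times $t$: (a) an element $x_i\in H$ is in $F$ if and only if $a_i\in I_F$; (b) the interval $I_F$ of every $F$ in $B[j]$ has length $2^j$; (c) all intervals of the Fibonacci heaps in $B[j-1]$ lie to the right of the intervals of the Fibonacci heaps in $B[j]$; (d) all the intervals together partition $[0,t)$. Then for any element $x_i\in H$, given $a_i$ and $t$, the bucket and the Fibonacci heap containing $x_i$ can be computed in constant time.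
   Context: Fibonacci heaps are the standard heap data structure of Fredman and Tarjan. Computation is in the word-RAM model. *)

theory Defs
  imports Complex_Main
begin

text \<open>Registers hold natural numbers below 2^w (w = word size). A program is a
fixed finite list of instructions without loops, so running it costs a number of
word operations independent of the input: this models "constant time".\<close>

definition msb_nat :: "nat \<Rightarrow> nat" where
  "msb_nat n = (LEAST k. n < 2 ^ Suc k)"   \<comment> \<open>floor(log2 n), and 0 for n = 0\<close>

datatype instr =
    Const nat nat
  | Add nat nat nat
  | Sub nat nat nat          \<comment> \<open>truncated subtraction\<close>
  | Mul nat nat nat
  | Div nat nat nat
  | Mod nat nat nat
  | BAnd nat nat nat
  | BOr nat nat nat
  | BXor nat nat nat
  | Shl nat nat nat
  | Shr nat nat nat
  | Msb nat nat
  | Lt nat nat nat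

fun step :: "nat \<Rightarrow> instr \<Rightarrow> (nat \<Rightarrow> nat) \<Rightarrow> (nat \<Rightarrow> nat)" where
  "step w (Const d c) s = s(d := c mod 2 ^ w)"
| "step w (Add d x y) s = s(d := (s x + s y) mod 2 ^ w)"
| "step w (Sub d x y) s = s(d := s x - s y)"
| "step w (Mul d x y) s = s(d := (s x * s y) mod 2 ^ w)"
| "step w (Div d x y) s = s(d := s x div s y)"
| "step w (Mod d x y) s = s(d := s x mod s y)"
| "step w (BAnd d x y) s = s(d := and (s x) (s y))"
| "step w (BOr d x y) s = s(d := or (s x) (s y))"
| "step w (BXor d x y) s = s(d := xor (s x) (s y))"
| "step w (Shl d x y) s = s(d := (s x * 2 ^ s y) mod 2 ^ w)"
| "step w (Shr d x y) s = s(d := s x div 2 ^ s y)"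
| "step w (Msb d x) s = s(d := msb_nat (s x))"
| "step w (Lt d x y) s = s(d := (if s x < s y then 1 else 0))"

definition run :: "nat \<Rightarrow> instr list \<Rightarrow> (nat \<Rightarrow> nat) \<Rightarrow> (nat \<Rightarrow> nat)" where
  "run w prog s = fold (step w) prog s"

text \<open>B ! j is bucket B[j]; it is a list of the left endpoints l of its Fibonacci
heaps, the heap with left endpoint l having interval I_F = [l, l + 2^j)
(invariant (b)).  By invariant (a), the heap containing x_i is the one whose
interval contains a_i, so a heap is identified by (bucket index, left endpoint).\<close>

definition heap_interval :: "nat \<Rightarrow> real \<Rightarrow> real set" where
  "heap_interval j l = {l ..< l + 2 ^ j}"

definition valid_buckets :: "nat \<Rightarrow> real list list \<Rightarrow> bool" where
  "valid_buckets t B \<longleftrightarrow>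
     \<comment> \<open>each bucket contains one or two Fibonacci heaps\<close>
     (\<forall>j < length B. length (B ! j) = 1 \<or> length (B ! j) = 2)
     \<comment> \<open>(c) intervals of B[j-1] lie to the right of those of B[j]\<close>
   \<and> (\<forall>j. 0 < j \<and> j < length B \<longrightarrow>
        (\<forall>l \<in> set (B ! (j - 1)). \<forall>l' \<in> set (B ! j). l' + 2 ^ j \<le> l))
     \<comment> \<open>(d) the intervals of all heaps are pairwise disjoint ...\<close>
   \<and> (\<forall>j p j' p'. j < length B \<and> p < length (B ! j) \<and> j' < length B \<and> p' < length (B ! j')
        \<and> (j, p) \<noteq> (j', p') \<longrightarrow>
        heap_interval j (B ! j ! p) \<inter> heap_interval j' (B ! j' ! p') = {})
     \<comment> \<open>... and together cover [0, t)\<close>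
   \<and> (\<Union>{heap_interval j l | j l. j < length B \<and> l \<in> set (B ! j)} = {0 ..< real t})"

end

theory Submission
  imports Defs "HOL-Analysis.Lebesgue_Measure"
begin

(* Let c_i be the number of heaps in bucket B[i] and R_j = (SUM i<j. c_i 2^i) the total length of
   the intervals in buckets below j. Since the buckets are laid out from t leftwards, bucket j
   covers [t - R_(j+1), t - R_j), and comparing lengths (Lebesgue measure) gives t = R_k. As
   every c_i is 1 or 2, we have 2^j - 1 <= R_j <= 2^(j+1) - 2, and R_j = t (mod 2^j); hence
   R_j = 2^j - 1 + ((t + 1) mod 2^j) is a function of t alone. The bucket of a is the j with
   R_j < t - a <= R_(j+1), which forces j = m or j = m - 1 for m = floor(log2(t - a)), and a single
   comparison decides. Inside the bucket, one division locates the heap. All of this is a fixed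
   sequence of word operations, none of which overflows since every intermediate value is at
   most t. *)

section \<open>Partitions of an interval into half-open intervals\<close>

lemma sum_lengths_of_interval_partition:
  fixes lo len :: "'i \<Rightarrow> real"
  assumes "finite S" "disjoint_family_on (\<lambda>i. {lo i..<lo i + len i}) S"
    "(\<Union>i\<in>S. {lo i..<lo i + len i}) = {x..<y}" "x \<le> y" "\<And>i. i \<in> S \<Longrightarrow> 0 \<le> len i"
  shows "(\<Sum>i\<in>S. len i) = y - x"
proof -
  have "(\<Sum>i\<in>S. len i) = (\<Sum>i\<in>S. measure lborel {lo i..<lo i + len i})"
    using assms(5) by simp
  also have "\<dots> = measure lborel (\<Union>i\<in>S. {lo i..<lo i + len i})"
    by (rule measure_finite_Union[symmetric]) (use assms(1,2,5) in auto)
  also have "\<dots> = y - x"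
    using assms(3,4) by simp
  finally show ?thesis .
qed

lemma interval_partition_bounds:
  fixes lo len :: "'i \<Rightarrow> real"
  assumes "(\<Union>i\<in>S. {lo i..<lo i + len i}) = {x..<y}" "i \<in> S" "0 < len i"
  shows "x \<le> lo i" "lo i + len i \<le> y"
proof -
  have "{lo i..<lo i + len i} \<subseteq> {x..<y}"
    using assms(1,2) by blast
  then show "x \<le> lo i" "lo i + len i \<le> y"
    using assms(3) by (simp_all add: atLeastLessThan_subset_iff)
qed

lemma interval_partition_right_of:
  fixes lo len :: "'i \<Rightarrow> real"
  assumes disj: "disjoint_family_on (\<lambda>i. {lo i..<lo i + len i}) S"
    and union: "(\<Union>i\<in>S. {lo i..<lo i + len i}) = {x..<y}"
    and pos: "\<And>i. i \<in> S \<Longrightarrow> 0 < len i" and "i\<^sub>0 \<in> S"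
  shows "(\<Union>i\<in>{i\<in>S. lo i\<^sub>0 < lo i}. {lo i..<lo i + len i}) = {lo i\<^sub>0 + len i\<^sub>0..<y}"
proof -
  have same: "i = i'" if "i \<in> S" "i' \<in> S" "v \<in> {lo i..<lo i + len i}" "v \<in> {lo i'..<lo i' + len i'}"
    for i i' v
    using disj that unfolding disjoint_family_on_def by blast
  have apart: "lo i + len i \<le> lo i'" if "i \<in> S" "i' \<in> S" "lo i < lo i'" for i i'
    using same[of i i' "lo i'"] that pos[of i'] by force
  have bounds: "x \<le> lo i" "lo i + len i \<le> y" if "i \<in> S" for i
    using interval_partition_bounds[OF union that pos[OF that]] by auto
  show ?thesis
  proof (intro equalityI subsetI)
    fix z assume "z \<in> (\<Union>i\<in>{i\<in>S. lo i\<^sub>0 < lo i}. {lo i..<lo i + len i})"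
    then show "z \<in> {lo i\<^sub>0 + len i\<^sub>0..<y}"
      using apart[OF \<open>i\<^sub>0 \<in> S\<close>] bounds by fastforce
  next
    fix z assume z: "z \<in> {lo i\<^sub>0 + len i\<^sub>0..<y}"
    then have "z \<in> (\<Union>i\<in>S. {lo i..<lo i + len i})"
      using union bounds[OF \<open>i\<^sub>0 \<in> S\<close>] pos[OF \<open>i\<^sub>0 \<in> S\<close>] by auto
    then obtain i where i: "i \<in> S" "z \<in> {lo i..<lo i + len i}"
      by blast
    have "i \<noteq> i\<^sub>0" "lo i \<noteq> lo i\<^sub>0"
      using i z same[of i i\<^sub>0 "lo i"] \<open>i\<^sub>0 \<in> S\<close> pos by force+
    moreover have "\<not> lo i < lo i\<^sub>0"
      using apart[OF i(1) \<open>i\<^sub>0 \<in> S\<close>] i z pos[OF \<open>i\<^sub>0 \<in> S\<close>] by auto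
    ultimately show "z \<in> (\<Union>i\<in>{i\<in>S. lo i\<^sub>0 < lo i}. {lo i..<lo i + len i})"
      using i by auto
  qed
qed

lemma sum_lengths_right_of:
  fixes lo len :: "'i \<Rightarrow> real"
  assumes "finite S" "disjoint_family_on (\<lambda>i. {lo i..<lo i + len i}) S"
    and "(\<Union>i\<in>S. {lo i..<lo i + len i}) = {x..<y}"
    and "\<And>i. i \<in> S \<Longrightarrow> 0 < len i" "i\<^sub>0 \<in> S"
  shows "(\<Sum>i\<in>{i\<in>S. lo i\<^sub>0 < lo i}. len i) = y - (lo i\<^sub>0 + len i\<^sub>0)"
proof (rule sum_lengths_of_interval_partition)
  show "disjoint_family_on (\<lambda>i. {lo i..<lo i + len i}) {i\<in>S. lo i\<^sub>0 < lo i}"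
    using assms(2) by (rule disjoint_family_on_mono[rotated]) blast
  show "lo i\<^sub>0 + len i\<^sub>0 \<le> y"
    using interval_partition_bounds(2)[OF assms(3,5) assms(4)[OF assms(5)]] .
qed (use assms(1) interval_partition_right_of[OF assms(2-5)] assms(4)[THEN less_imp_le] in auto)

section \<open>Bucket arithmetic\<close>

lemma msb_nat_bounds:
  assumes "0 < n"
  shows "2 ^ msb_nat n \<le> n" "n < 2 ^ Suc (msb_nat n)"
proof -
  have "n < 2 ^ Suc n"
    using less_exp[of "Suc n"] by linarith
  then show "n < 2 ^ Suc (msb_nat n)"
    unfolding msb_nat_def by (rule LeastI)
  show "2 ^ msb_nat n \<le> n"
  proof (cases "msb_nat n")
    case 0
    then show ?thesis using assms by simp
  next
    case (Suc k)
    then have "\<not> n < 2 ^ Suc k"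
      unfolding msb_nat_def by (metis lessI not_less_Least)
    then show ?thesis using Suc by simp
  qed
qed

definition buckets_length :: "(nat \<Rightarrow> nat) \<Rightarrow> nat \<Rightarrow> nat" where
  "buckets_length c j = (\<Sum>i<j. c i * 2 ^ i)"

lemma buckets_length_Suc: "buckets_length c (Suc j) = buckets_length c j + c j * 2 ^ j"
  by (simp add: buckets_length_def)

lemma buckets_length_bounds:
  assumes "\<forall>i<j. c i = 1 \<or> c i = 2"
  shows "2 ^ j \<le> buckets_length c j + 1" "buckets_length c j + 2 \<le> 2 ^ Suc j"
  using assms by (induction j) (auto simp: buckets_length_def)

lemma buckets_length_mod:
  assumes "j \<le> k"
  shows "buckets_length c k mod 2 ^ j = buckets_length c j mod 2 ^ j"
  using assms
proof (induction k rule: dec_induct)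
  case (step k)
  have "(2::nat) ^ j dvd c k * 2 ^ k"
    using step.hyps(1) by (simp add: le_imp_power_dvd)
  then show ?case
    using step.IH by (metis buckets_length_Suc dvd_imp_mod_0 mod_add_right_eq add_0_right)
qed simp

definition bucket_offset :: "nat \<Rightarrow> nat \<Rightarrow> nat" where
  "bucket_offset t j = 2 ^ j - 1 + (t + 1) mod 2 ^ j"

lemma bucket_offset_buckets_length:
  assumes "\<forall>i<k. c i = 1 \<or> c i = 2" "j \<le> k"
  shows "bucket_offset (buckets_length c k) j = buckets_length c j"
proof -
  define r where "r = buckets_length c j"
  have "2 ^ j \<le> r + 1" "r + 1 < 2 ^ j + 2 ^ j"
    using buckets_length_bounds[of j c] assms unfolding r_def by auto
  then have "(r + 1) mod 2 ^ j = r + 1 - 2 ^ j"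
    by (simp add: le_mod_geq)
  moreover have "(buckets_length c k + 1) mod 2 ^ j = (r + 1) mod 2 ^ j"
    using buckets_length_mod[OF assms(2)] unfolding r_def by (metis mod_add_left_eq)
  ultimately show ?thesis
    using \<open>2 ^ j \<le> r + 1\<close> unfolding bucket_offset_def r_def by simp
qed

lemma bucket_offset_le:
  assumes "2 ^ j \<le> t"
  shows "bucket_offset t j \<le> t"
proof (cases "t mod 2 ^ j + 1 = 2 ^ j")
  case True
  then have "(t + 1) mod 2 ^ j = 0"
    by (metis mod_Suc_eq mod_self Suc_eq_plus1)
  then show ?thesis
    using assms unfolding bucket_offset_def by simp
next
  case False
  moreover have "t mod 2 ^ j < 2 ^ j"
    by simp
  ultimately have "t mod 2 ^ j + 1 < 2 ^ j"
    by linarith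
  then have "(t + 1) mod 2 ^ j = t mod 2 ^ j + 1"
    by (metis mod_Suc_eq Suc_eq_plus1 mod_less)
  moreover have "2 ^ j + t mod 2 ^ j \<le> t"
  proof -
    have "2 ^ j \<le> 2 ^ j * (t div 2 ^ j)"
      using div_le_mono[OF assms, of "2 ^ j"] by simp
    then show ?thesis
      using mult_div_mod_eq[of "2 ^ j" t] by linarith
  qed
  ultimately show ?thesis
    unfolding bucket_offset_def by simp
qed

definition bucket_index :: "nat \<Rightarrow> nat \<Rightarrow> nat" where
  "bucket_index t a =
     (let u = t - a; m = msb_nat u in if bucket_offset t m < u then m else m - 1)"

definition heap_start :: "nat \<Rightarrow> nat \<Rightarrow> nat" where
  "heap_start t a =
     (let j = bucket_index t a; r = bucket_offset t j
      in t - r - ((t - a - r - 1) div 2 ^ j + 1) * 2 ^ j)"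

lemma two_power_bucket_index_le:
  assumes "a < t"
  shows "2 ^ bucket_index t a \<le> t - a"
proof -
  have "bucket_index t a \<le> msb_nat (t - a)"
    unfolding bucket_index_def Let_def by auto
  then have "(2::nat) ^ bucket_index t a \<le> 2 ^ msb_nat (t - a)"
    by (rule power_increasing) simp
  also have "\<dots> \<le> t - a"
    using msb_nat_bounds(1)[of "t - a"] assms by simp
  finally show ?thesis .
qed

lemma bucket_index_eqI:
  assumes c: "\<forall>i<k. c i = 1 \<or> c i = 2" and t: "t = buckets_length c k" and "j < k"
    and above: "buckets_length c j < t - a" and below: "t - a \<le> buckets_length c (Suc j)"
  shows "bucket_index t a = j"
proof -
  define m where "m = msb_nat (t - a)"
  have m: "2 ^ m \<le> t - a" "t - a < 2 ^ Suc m"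
    using msb_nat_bounds[of "t - a"] above unfolding m_def by auto
  have "2 ^ j < (2::nat) ^ Suc m"
    using m(2) above buckets_length_bounds(1)[of j c] c \<open>j < k\<close> by auto
  moreover have "2 ^ m < (2::nat) ^ Suc (Suc j)"
    using m(1) below buckets_length_bounds(2)[of "Suc j" c] c \<open>j < k\<close> by auto
  ultimately have "j < Suc m" "m < Suc (Suc j)"
    by (simp_all del: power_Suc)
  then have "m = j \<or> m = Suc j"
    by auto
  moreover have "bucket_offset t i = buckets_length c i" if "i \<le> Suc j" for i
    using bucket_offset_buckets_length[OF c] t that \<open>j < k\<close> by simp
  ultimately show ?thesis
    using above below unfolding bucket_index_def Let_def m_def[symmetric] by auto
qed

lemma heap_start_eqI:
  assumes "bucket_index t a = j" "bucket_offset t j = r"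
    and "l + r + (g + 1) * 2 ^ j = t" "l \<le> a" "a < l + 2 ^ j"
  shows "heap_start t a = l"
proof -
  have "(t - a - r - 1) div 2 ^ j = g"
    by (rule div_nat_eqI) (use assms(3-5) in \<open>simp_all add: algebra_simps\<close>)
  then show ?thesis
    using assms unfolding heap_start_def by simp
qed

section \<open>Valid bucket arrays\<close>

definition heaps :: "real list list \<Rightarrow> (nat \<times> nat) set" where
  "heaps B = Sigma {..<length B} (\<lambda>j. {..<length (B ! j)})"

lemma valid_buckets_bucket_size:
  assumes "valid_buckets t B" "j < length B"
  shows "length (B ! j) = 1 \<or> length (B ! j) = 2"
proof -
  have "\<forall>j < length B. length (B ! j) = 1 \<or> length (B ! j) = 2"
    using assms(1) unfolding valid_buckets_def by (elim conjE) assumption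
  then show ?thesis
    using assms(2) by blast
qed

lemma valid_buckets_next_left_of:
  assumes "valid_buckets t B" "Suc j < length B" "l \<in> set (B ! j)" "l' \<in> set (B ! Suc j)"
  shows "l' + 2 ^ Suc j \<le> l"
proof -
  have "\<forall>j. 0 < j \<and> j < length B \<longrightarrow>
      (\<forall>l \<in> set (B ! (j - 1)). \<forall>l' \<in> set (B ! j). l' + 2 ^ j \<le> l)"
    using assms(1) unfolding valid_buckets_def by (elim conjE) assumption
  then show ?thesis
    using assms(2-4) by (metis diff_Suc_1 zero_less_Suc)
qed

lemma valid_buckets_partition:
  assumes "valid_buckets t B"
  shows "disjoint_family_on (\<lambda>x. {B ! fst x ! snd x..<B ! fst x ! snd x + 2 ^ fst x}) (heaps B)"
    and "(\<Union>x\<in>heaps B. {B ! fst x ! snd x..<B ! fst x ! snd x + 2 ^ fst x}) = {0..<real t}"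
proof -
  have "\<forall>j p j' p'. j < length B \<and> p < length (B ! j) \<and> j' < length B \<and> p' < length (B ! j')
        \<and> (j, p) \<noteq> (j', p') \<longrightarrow>
        heap_interval j (B ! j ! p) \<inter> heap_interval j' (B ! j' ! p') = {}"
    using assms unfolding valid_buckets_def by (elim conjE) assumption
  then show "disjoint_family_on (\<lambda>x. {B ! fst x ! snd x..<B ! fst x ! snd x + 2 ^ fst x}) (heaps B)"
    unfolding disjoint_family_on_def heaps_def heap_interval_def by auto
  have "{heap_interval j l | j l. j < length B \<and> l \<in> set (B ! j)}
      = (\<lambda>x. heap_interval (fst x) (B ! fst x ! snd x)) ` heaps B"
    unfolding heaps_def by (force simp: in_set_conv_nth)
  moreover have "\<Union>{heap_interval j l | j l. j < length B \<and> l \<in> set (B ! j)} = {0..<real t}"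
    using assms unfolding valid_buckets_def by (elim conjE) assumption
  ultimately show "(\<Union>x\<in>heaps B. {B ! fst x ! snd x..<B ! fst x ! snd x + 2 ^ fst x}) = {0..<real t}"
    unfolding heap_interval_def by simp
qed

lemma sum_power_fst_Sigma_lessThan:
  "(\<Sum>x\<in>Sigma A (\<lambda>j. {..<c j}). (2::real) ^ fst x) = (\<Sum>j\<in>A. real (c j) * 2 ^ j)"
  if "finite A"
proof -
  have "(\<Sum>j\<in>A. \<Sum>p<c j. (2::real) ^ j) = (\<Sum>(j, p)\<in>Sigma A (\<lambda>j. {..<c j}). 2 ^ j)"
    by (rule sum.Sigma) (use that in auto)
  then show ?thesis
    by (simp add: split_def)
qed

lemma valid_buckets_length:
  assumes "valid_buckets t B"
  shows "t = buckets_length (\<lambda>j. length (B ! j)) (length B)"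
proof -
  have "real t - 0 = (\<Sum>x\<in>heaps B. (2::real) ^ fst x)"
    by (rule sum_lengths_of_interval_partition[symmetric])
      (use valid_buckets_partition[OF assms] in \<open>auto simp: heaps_def\<close>)
  also have "\<dots> = real (buckets_length (\<lambda>j. length (B ! j)) (length B))"
    unfolding heaps_def buckets_length_def by (simp add: sum_power_fst_Sigma_lessThan)
  finally show ?thesis
    by simp
qed

lemma valid_buckets_left_of:
  assumes "valid_buckets t B" "j < j'" "j' < length B" "l \<in> set (B ! j)" "l' \<in> set (B ! j')"
  shows "l' + 2 ^ j' \<le> l"
  using assms(2-5)
proof (induction j' arbitrary: l')
  case (Suc n)
  show ?case
  proof (cases "j = n")
    case True
    then show ?thesis
      using valid_buckets_next_left_of[OF assms(1)] Suc.prems by blast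
  next
    case False
    have "length (B ! n) \<noteq> 0"
      using valid_buckets_bucket_size[OF assms(1), of n] Suc.prems(2) by auto
    then obtain l'' where "l'' \<in> set (B ! n)"
      by (metis length_0_conv list.set_intros(1) neq_Nil_conv)
    then have "l'' + 2 ^ n \<le> l" "l' + 2 ^ Suc n \<le> l''"
      using Suc False valid_buckets_next_left_of[OF assms(1)] by auto
    then show ?thesis
      using zero_le_power[of "2::real" n] by linarith
  qed
qed simp

lemma valid_buckets_heaps_right_of:
  assumes "valid_buckets t B" "(j, p) \<in> heaps B"
  shows "{x \<in> heaps B. B ! j ! p < B ! fst x ! snd x}
    = Sigma {..<j} (\<lambda>i. {..<length (B ! i)}) \<union> {j} \<times> {q. q < length (B ! j) \<and> B ! j ! p < B ! j ! q}"
    (is "?lhs = ?rhs")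
proof -
  have right_of_iff: "B ! j ! p < B ! i ! q \<longleftrightarrow> i < j \<or> i = j \<and> B ! j ! p < B ! j ! q"
    if "i < length B" "q < length (B ! i)" for i q
  proof (cases i j rule: linorder_cases)
    case less
    then have "B ! j ! p + 2 ^ j \<le> B ! i ! q"
      using valid_buckets_left_of[OF assms(1)] assms(2) that unfolding heaps_def by auto
    then have "B ! j ! p < B ! i ! q"
      using zero_less_power[of "2::real" j] by linarith
    then show ?thesis
      using less by simp
  next
    case greater
    then have "B ! i ! q + 2 ^ i \<le> B ! j ! p"
      using valid_buckets_left_of[OF assms(1), of j i] assms(2) that unfolding heaps_def by auto
    then have "\<not> B ! j ! p < B ! i ! q"
      using zero_less_power[of "2::real" i] by linarith
    then show ?thesis
      using greater by simp
  qed simp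
  have "j < length B"
    using assms(2) unfolding heaps_def by simp
  show ?thesis
  proof (rule set_eqI)
    fix x :: "nat \<times> nat"
    obtain i q where x: "x = (i, q)"
      by fastforce
    show "x \<in> ?lhs \<longleftrightarrow> x \<in> ?rhs"
      using right_of_iff[of i q] \<open>j < length B\<close> unfolding x heaps_def by auto
  qed
qed

lemma valid_buckets_length_right_of:
  assumes v: "valid_buckets t B" and jp: "(j, p) \<in> heaps B"
  defines "G \<equiv> {q. q < length (B ! j) \<and> B ! j ! p < B ! j ! q}"
  shows "real t - (B ! j ! p + 2 ^ j)
    = real (buckets_length (\<lambda>i. length (B ! i)) j) + real (card G) * 2 ^ j"
proof -
  have sum_G: "(\<Sum>x\<in>{j} \<times> G. (2::real) ^ fst x) = real (card G) * 2 ^ j"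
  proof -
    have "(\<Sum>x\<in>{j} \<times> G. (2::real) ^ fst x) = (\<Sum>x\<in>{j} \<times> G. 2 ^ j)"
      by (rule sum.cong) auto
    then show ?thesis
      by (simp add: card_cartesian_product_singleton)
  qed
  have "real t - (B ! j ! p + 2 ^ j) = (\<Sum>x\<in>{x \<in> heaps B. B ! j ! p < B ! fst x ! snd x}. 2 ^ fst x)"
    using sum_lengths_right_of[OF _ valid_buckets_partition[OF v] _ jp] by (simp add: heaps_def)
  also have "\<dots> = (\<Sum>x\<in>Sigma {..<j} (\<lambda>i. {..<length (B ! i)}) \<union> {j} \<times> G. 2 ^ fst x)"
    unfolding valid_buckets_heaps_right_of[OF v jp] G_def ..
  also have "\<dots> = (\<Sum>x\<in>Sigma {..<j} (\<lambda>i. {..<length (B ! i)}). 2 ^ fst x)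
      + (\<Sum>x\<in>{j} \<times> G. 2 ^ fst x)"
    by (rule sum.union_disjoint) (auto simp: G_def)
  also have "\<dots> = real (buckets_length (\<lambda>i. length (B ! i)) j) + real (card G) * 2 ^ j"
    unfolding sum_G by (simp add: sum_power_fst_Sigma_lessThan buckets_length_def)
  finally show ?thesis .
qed

lemma valid_buckets_heap_position:
  assumes v: "valid_buckets t B" and "a < t"
  obtains j p g l where "(j, p) \<in> heaps B" "g < length (B ! j)" "B ! j ! p = real l"
    and "l \<le> a" "a < l + 2 ^ j" "l + buckets_length (\<lambda>i. length (B ! i)) j + (g + 1) * 2 ^ j = t"
proof -
  note partition = valid_buckets_partition[OF v]
  have "real a \<in> {0..<real t}"
    using assms(2) by simp
  then obtain j p where jp: "(j, p) \<in> heaps B" "B ! j ! p \<le> real a" "real a < B ! j ! p + 2 ^ j"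
    unfolding partition(2)[symmetric] by auto
  define R where "R = buckets_length (\<lambda>i. length (B ! i)) j"
  define G where "G = {q. q < length (B ! j) \<and> B ! j ! p < B ! j ! q}"
  have real_t: "B ! j ! p + real (R + (card G + 1) * 2 ^ j) = real t"
    using valid_buckets_length_right_of[OF v jp(1)] unfolding R_def G_def by (simp add: algebra_simps)
  moreover have "0 \<le> B ! j ! p"
    using interval_partition_bounds(1)[OF partition(2), of "(j, p)"] jp(1) by simp
  ultimately have "R + (card G + 1) * 2 ^ j \<le> t"
    using of_nat_le_iff by linarith
  define l where "l = t - R - (card G + 1) * 2 ^ j"
  have start: "B ! j ! p = real l" and sum_l: "l + R + (card G + 1) * 2 ^ j = t"
    using \<open>R + (card G + 1) * 2 ^ j \<le> t\<close> real_t unfolding l_def by (simp_all add: of_nat_diff)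
  have "l \<le> a"
    using jp(2) start by simp
  have "real a < real (l + 2 ^ j)"
    using jp(3) start by simp
  then have "a < l + 2 ^ j"
    by (simp only: of_nat_less_iff)
  have "G \<subseteq> {..<length (B ! j)} - {p}"
    unfolding G_def by auto
  then have "card G < length (B ! j)"
    using card_mono[of "{..<length (B ! j)} - {p}" G] jp(1) unfolding heaps_def by fastforce
  then show ?thesis
    using that jp(1) start \<open>l \<le> a\<close> \<open>a < l + 2 ^ j\<close> sum_l unfolding R_def by blast
qed

lemma valid_buckets_locate:
  assumes v: "valid_buckets t B" and "a < t"
  shows "bucket_index t a < length B \<and> real (heap_start t a) \<in> set (B ! bucket_index t a)
    \<and> real a \<in> heap_interval (bucket_index t a) (real (heap_start t a))"
proof -
  define c where "c = (\<lambda>i. length (B ! i))"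
  obtain j p g l where jp: "(j, p) \<in> heaps B" "g < c j" "B ! j ! p = real l"
    and l: "l \<le> a" "a < l + 2 ^ j" "l + buckets_length c j + (g + 1) * 2 ^ j = t"
    using valid_buckets_heap_position[OF assms] unfolding c_def by metis
  have "j < length B"
    using jp(1) unfolding heaps_def by simp
  have counts: "\<forall>i<length B. c i = 1 \<or> c i = 2"
    using valid_buckets_bucket_size[OF v] unfolding c_def by blast
  have t: "t = buckets_length c (length B)"
    using valid_buckets_length[OF v] unfolding c_def .
  have "(g + 1) * 2 ^ j \<le> c j * 2 ^ j"
    using jp(2) by (intro mult_right_mono) auto
  then have "bucket_index t a = j"
    using l by (intro bucket_index_eqI[OF counts t \<open>j < length B\<close>]) (auto simp: buckets_length_Suc)
  moreover have "heap_start t a = l"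
    using bucket_offset_buckets_length[OF counts, of j] \<open>j < length B\<close> t l
    by (intro heap_start_eqI[OF \<open>bucket_index t a = j\<close>]) auto
  moreover have "real a < real (l + 2 ^ j)"
    using l(2) by (simp only: of_nat_less_iff)
  moreover have "B ! j ! p \<in> set (B ! j)"
    using jp(1) unfolding heaps_def by simp
  ultimately show ?thesis
    using \<open>j < length B\<close> jp(3) l(1,2) unfolding heap_interval_def by simp
qed

section \<open>The word-RAM program\<close>

lemma run_append: "run w (p @ q) s = run w q (run w p s)"
  by (simp add: run_def)

definition offset_prog :: "instr list" where
  "offset_prog = [Mod 6 1 5, Add 6 6 2, Mod 6 6 5, Sub 8 5 2, Add 6 8 6]"

lemma run_offset_prog:
  assumes "s 1 = t" "s 2 = 1" "s 5 = 2 ^ j" "2 ^ j \<le> t" "t < 2 ^ w"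
  shows "run w offset_prog s = s(8 := 2 ^ j - 1, 6 := bucket_offset t j)"
proof -
  have "t mod 2 ^ j + 1 \<le> 2 ^ j"
    by (simp add: Suc_leI)
  moreover have "bucket_offset t j < 2 ^ w"
    using bucket_offset_le[OF assms(4)] assms(5) by linarith
  ultimately show ?thesis
    using assms unfolding offset_prog_def run_def bucket_offset_def
    by (simp add: mod_Suc_eq add.commute)
qed

lemma div_add_one_mult_le:
  fixes d r u :: nat
  assumes "d - 1 \<le> r" "d \<le> u"
  shows "((u - r - 1) div d + 1) * d \<le> u"
proof (cases "r < u")
  case True
  have "(u - r - 1) div d * d \<le> u - r - 1"
    by (rule div_times_less_eq_dividend)
  then show ?thesis
    using True assms(1) by (simp only: distrib_right)
next
  case False
  then show ?thesis
    using assms(2) by simp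
qed

(* Register use: r0 = a and r1 = t on input; r2 = 1, r3 = t - a, r4 = m = msb_nat (t - a),
   r5 = 2^m and later 2^j, r6 = bucket_offset t m and later bucket_offset t j, r7 = j, r8 scratch.
   The output is r1 = left endpoint of the heap and r0 = j, copied from r7 as r7 div r2. *)
definition index_prog :: "instr list" where
  "index_prog =
     [Const 2 1, Sub 3 1 0, Msb 4 3, Shl 5 2 4] @ offset_prog @ [Lt 7 6 3, Add 7 4 7, Sub 7 7 2, Shl 5 2 7]"

lemma run_index_prog:
  assumes "s 0 = a" "s 1 = t" "a < t" "t < 2 ^ w"
  defines "s' \<equiv> run w index_prog s"
  shows "s' 0 = a" "s' 1 = t" "s' 2 = 1" "s' 3 = t - a"
    and "s' 5 = 2 ^ bucket_index t a" "s' 7 = bucket_index t a"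
proof -
  define m where "m = msb_nat (t - a)"
  define j where "j = bucket_index t a"
  have "2 ^ m \<le> t - a"
    using msb_nat_bounds(1)[of "t - a"] assms(3) unfolding m_def by simp
  then have "(2::nat) ^ m < 2 ^ w"
    using assms(4) by linarith
  then have "m < w"
    by simp
  then have "m + 1 < 2 ^ w"
    using less_exp[of w] by linarith
  have "(2::nat) ^ j < 2 ^ w"
    using two_power_bucket_index_le[OF assms(3)] assms(4) unfolding j_def by linarith
  have j_eq: "m + (if bucket_offset t m < t - a then 1 else 0) - 1 = j"
    unfolding j_def bucket_index_def Let_def m_def[symmetric] by auto
  define s1 where "s1 = s(2 := 1, 3 := t - a, 4 := m, 5 := 2 ^ m)"
  have "run w [Const 2 1, Sub 3 1 0, Msb 4 3, Shl 5 2 4] s = s1"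
    using assms(1,2) \<open>m < w\<close> \<open>2 ^ m < 2 ^ w\<close> unfolding s1_def m_def run_def by simp
  moreover have "run w offset_prog s1 = s1(8 := 2 ^ m - 1, 6 := bucket_offset t m)"
    by (rule run_offset_prog) (use assms(2,4) \<open>2 ^ m \<le> t - a\<close> in \<open>simp_all add: s1_def\<close>)
  ultimately have "s' = s1(8 := 2 ^ m - 1, 6 := bucket_offset t m, 7 := j, 5 := 2 ^ j)"
    using \<open>m + 1 < 2 ^ w\<close> \<open>2 ^ j < 2 ^ w\<close> j_eq
    unfolding s'_def index_prog_def run_append by (simp add: run_def s1_def)
  then show "s' 0 = a" "s' 1 = t" "s' 2 = 1" "s' 3 = t - a"
    and "s' 5 = 2 ^ bucket_index t a" "s' 7 = bucket_index t a"
    using assms(1,2) unfolding s1_def j_def by simp_all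
qed

definition locate_prog :: "instr list" where
  "locate_prog = index_prog @ offset_prog @
     [Sub 8 3 6, Sub 8 8 2, Shr 8 8 7, Add 8 8 2, Mul 8 8 5, Sub 1 1 6, Sub 1 1 8, Div 0 7 2]"

lemma run_locate_prog:
  assumes "s 0 = a" "s 1 = t" "a < t" "t < 2 ^ w"
  shows "run w locate_prog s 0 = bucket_index t a \<and> run w locate_prog s 1 = heap_start t a"
proof -
  define j where "j = bucket_index t a"
  define q where "q = (t - a - bucket_offset t j - 1) div 2 ^ j"
  define s' where "s' = run w index_prog s"
  note s' = run_index_prog[OF assms, folded s'_def j_def]
  have "2 ^ j \<le> t - a"
    using two_power_bucket_index_le[OF assms(3)] unfolding j_def .
  then have "(q + 1) * 2 ^ j \<le> t - a"
    unfolding q_def by (rule div_add_one_mult_le[rotated]) (simp add: bucket_offset_def)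
  moreover have "q + 1 \<le> (q + 1) * 2 ^ j"
    using mult_le_mono2[of 1 "2 ^ j" "q + 1"] by simp
  ultimately have "(q + 1) * 2 ^ j < 2 ^ w" "q + 1 < 2 ^ w"
    using assms(4) by linarith+
  have "run w offset_prog s' = s'(8 := 2 ^ j - 1, 6 := bucket_offset t j)"
    by (rule run_offset_prog) (use s' assms(4) \<open>2 ^ j \<le> t - a\<close> in simp_all)
  then show ?thesis
    using s' \<open>(q + 1) * 2 ^ j < 2 ^ w\<close> \<open>q + 1 < 2 ^ w\<close>
    unfolding locate_prog_def run_append s'_def[symmetric] heap_start_def Let_def j_def[symmetric] q_def
    by (simp add: run_def)
qed

theorem lemma4:
  shows "\<exists>prog :: instr list. \<forall>(w::nat) (t::nat) (B::real list list) (a::nat).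
           t < 2 ^ w \<longrightarrow> valid_buckets t B \<longrightarrow> a < t \<longrightarrow>
           (let s = run w prog (\<lambda>r. if r = 0 then a else if r = 1 then t else 0)
            in s 0 < length B \<and> real (s 1) \<in> set (B ! s 0)
               \<and> real a \<in> heap_interval (s 0) (real (s 1)))"
proof (intro exI[of _ locate_prog] allI impI)
  fix w t a :: nat and B :: "real list list"
  assume "t < 2 ^ w" "valid_buckets t B" "a < t"
  then show "let s = run w locate_prog (\<lambda>r. if r = 0 then a else if r = 1 then t else 0)
            in s 0 < length B \<and> real (s 1) \<in> set (B ! s 0)
               \<and> real a \<in> heap_interval (s 0) (real (s 1))"
    using run_locate_prog[of "\<lambda>r. if r = 0 then a else if r = 1 then t else 0" a t w]
      valid_buckets_locate[of t B a]
    by (simp add: Let_def)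
qed

end
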